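(* Let $H$ be a complex Hilbert space and let $T$ be a positive closed operator in $H$ (i.e. $T$ is densely defined, closed, $T=T^*$ and $\langle Tx,x\rangle\geq 0$ for all $x\in D(T)$). Then for each $\epsilon>0$ there exists a bounded operator $S\in\mathcal B(H)$ such that (1) $\|S\|\leq\epsilon$; (2) $T+S$ (with domain $D(T)$) is minimum attaining; (3) $\theta(S+T,T)\leq\epsilon$.
   Context: Hilbert spaces are complex and infinite dimensional. For a densely defined closed operator $A$ with domain $D(A)$, the minimum modulus is $m(A)=\inf\{\|Ax\|: x\in D(A),\ \|x\|=1\}$, and $A$ is called minimum attaining if there exists $x_0\in D(A)$ with $\|x_0\|=1$ and $\|Ax_0\|=m(A)$. The graph of $A$ is $G(A)=\{(Ax,x):x\in D(A)\}$; the gap between densely defined closed operators $A,B$ is $\theta(A,B)=\|P_{G(A)}-P_{G(B)}\|$, where $P_M$ is the orthogonal projection onto the closed subspace $M$. *)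

theory Defs
  imports "HOL-Analysis.Analysis"
begin

class chilbert = real_normed_vector + complete_space +
  fixes scaleC :: "complex \<Rightarrow> 'a \<Rightarrow> 'a" (infixr "*\<^sub>C" 75)
    and cinner :: "'a \<Rightarrow> 'a \<Rightarrow> complex"
  assumes scaleC_add_right: "a *\<^sub>C (x + y) = a *\<^sub>C x + a *\<^sub>C y"
    and scaleC_add_left: "(a + b) *\<^sub>C x = a *\<^sub>C x + b *\<^sub>C x"
    and scaleC_scaleC: "a *\<^sub>C (b *\<^sub>C x) = (a * b) *\<^sub>C x"
    and scaleC_one: "1 *\<^sub>C x = x"
    and scaleR_scaleC: "scaleR r x = complex_of_real r *\<^sub>C x"
    and cinner_commute: "cinner x y = cnj (cinner y x)"
    and cinner_add_right: "cinner x (y + z) = cinner x y + cinner x z"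
    and cinner_scaleC_right: "cinner x (a *\<^sub>C y) = a * cinner x y"
    and norm_eq_sqrt_cinner: "norm x = sqrt (Re (cinner x x))"

definition infinite_dimensional :: "'a::chilbert itself \<Rightarrow> bool" where
  "infinite_dimensional _ \<longleftrightarrow>
     (\<forall>F::'a set. finite F \<longrightarrow> (\<exists>x. \<forall>c. x \<noteq> (\<Sum>v\<in>F. c v *\<^sub>C v)))"

text \<open>An (unbounded) operator is a pair of a domain D and a map A (values of A
outside D are irrelevant).\<close>

definition complex_subspace :: "'a::chilbert set \<Rightarrow> bool" where
  "complex_subspace D \<longleftrightarrow> 0 \<in> D \<and> (\<forall>x\<in>D. \<forall>y\<in>D. x + y \<in> D)
     \<and> (\<forall>c. \<forall>x\<in>D. c *\<^sub>C x \<in> D)"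

definition linear_on :: "'a::chilbert set \<Rightarrow> ('a \<Rightarrow> 'a) \<Rightarrow> bool" where
  "linear_on D A \<longleftrightarrow> (\<forall>x\<in>D. \<forall>y\<in>D. A (x + y) = A x + A y)
     \<and> (\<forall>c. \<forall>x\<in>D. A (c *\<^sub>C x) = c *\<^sub>C A x)"

definition densely_defined :: "'a::chilbert set \<Rightarrow> ('a \<Rightarrow> 'a) \<Rightarrow> bool" where
  "densely_defined D A \<longleftrightarrow> complex_subspace D \<and> closure D = UNIV \<and> linear_on D A"

definition graph :: "'a::chilbert set \<Rightarrow> ('a \<Rightarrow> 'a) \<Rightarrow> ('a \<times> 'a) set" where
  "graph D A = {(A x, x) | x. x \<in> D}"

definition closed_op :: "'a::chilbert set \<Rightarrow> ('a \<Rightarrow> 'a) \<Rightarrow> bool" where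
  "closed_op D A \<longleftrightarrow> closed (graph D A)"

definition adj_dom :: "'a::chilbert set \<Rightarrow> ('a \<Rightarrow> 'a) \<Rightarrow> 'a set" where
  "adj_dom D A = {y. \<exists>z. \<forall>x\<in>D. cinner (A x) y = cinner x z}"

definition adjoint :: "'a::chilbert set \<Rightarrow> ('a \<Rightarrow> 'a) \<Rightarrow> 'a \<Rightarrow> 'a" where
  "adjoint D A y = (THE z. \<forall>x\<in>D. cinner (A x) y = cinner x z)"

definition self_adjoint :: "'a::chilbert set \<Rightarrow> ('a \<Rightarrow> 'a) \<Rightarrow> bool" where
  "self_adjoint D A \<longleftrightarrow> adj_dom D A = D \<and> (\<forall>y\<in>D. adjoint D A y = A y)"

definition positive_closed_op :: "'a::chilbert set \<Rightarrow> ('a \<Rightarrow> 'a) \<Rightarrow> bool" where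
  "positive_closed_op D T \<longleftrightarrow> densely_defined D T \<and> closed_op D T \<and> self_adjoint D T
     \<and> (\<forall>x\<in>D. Im (cinner (T x) x) = 0 \<and> Re (cinner (T x) x) \<ge> 0)"

definition bounded_clinear :: "('a::chilbert \<Rightarrow> 'a) \<Rightarrow> bool" where
  "bounded_clinear S \<longleftrightarrow> linear_on UNIV S \<and> (\<exists>K. \<forall>x. norm (S x) \<le> norm x * K)"

definition min_modulus :: "'a::chilbert set \<Rightarrow> ('a \<Rightarrow> 'a) \<Rightarrow> real" where
  "min_modulus D A = Inf {norm (A x) | x. x \<in> D \<and> norm x = 1}"

definition minimum_attaining :: "'a::chilbert set \<Rightarrow> ('a \<Rightarrow> 'a) \<Rightarrow> bool" where
  "minimum_attaining D A \<longleftrightarrow> (\<exists>x0\<in>D. norm x0 = 1 \<and> norm (A x0) = min_modulus D A)"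

text \<open>Hilbert space H \<oplus> H: inner product on pairs; its norm is the product
norm of Product_Vector (norm_Pair).\<close>
definition pinner :: "'a::chilbert \<times> 'a \<Rightarrow> 'a \<times> 'a \<Rightarrow> complex" where
  "pinner p q = cinner (fst p) (fst q) + cinner (snd p) (snd q)"

definition orth_proj :: "('a::chilbert \<times> 'a) set \<Rightarrow> 'a \<times> 'a \<Rightarrow> 'a \<times> 'a" where
  "orth_proj M z = (THE p. p \<in> M \<and> (\<forall>m\<in>M. pinner (z - p) m = 0))"

definition gap :: "'a::chilbert set \<Rightarrow> ('a \<Rightarrow> 'a) \<Rightarrow> 'a set \<Rightarrow> ('a \<Rightarrow> 'a) \<Rightarrow> real" where
  "gap DA A DB B = onorm (\<lambda>z. orth_proj (graph DA A) z - orth_proj (graph DB B) z)"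

end

theory Submission
  imports Defs
begin

text \<open>Let \<open>c\<close> be the infimum of the numerical range of \<open>T\<close>, so that \<open>A = T - c\<close> is a
nonnegative self-adjoint operator. Then \<open>c\<close> is an approximate eigenvalue: if \<open>A\<close> were bounded
below by \<open>\<eta> > 0\<close>, its range would be closed and, by self-adjointness, everything; Cauchy-Schwarz
for the form of \<open>A\<close> would then give \<open>\<langle>A x, x\<rangle> \<ge> \<eta> \<parallel>x\<parallel>\<^sup>2\<close>, contradicting the choice of \<open>c\<close>.
Pick a unit vector \<open>x0 \<in> D\<close> with \<open>\<parallel>A x0\<parallel> \<le> \<epsilon>/3\<close> and let \<open>S\<close> be the rank-two operator with
\<open>T + S = c + P A P\<close>, where \<open>P\<close> projects onto the orthogonal complement of \<open>x0\<close>. Then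
\<open>\<parallel>S\<parallel> \<le> 3 \<parallel>A x0\<parallel> \<le> \<epsilon>\<close>, the form of \<open>T + S\<close> is bounded below by \<open>c\<close> and \<open>(T + S) x0 = c x0\<close>, so
the minimum modulus \<open>c\<close> is attained at \<open>x0\<close>. Finally each point of either graph lies within
\<open>\<epsilon>\<close> times its norm of the other graph, and this bounds the distance of the two orthogonal
projections.\<close>

section \<open>Inner product algebra\<close>

lemma cinner_add_left: "cinner (x + y) (z::'a::chilbert) = cinner x z + cinner y z"
  by (metis cinner_commute cinner_add_right complex_cnj_add)

lemma cinner_scaleC_left: "cinner (a *\<^sub>C x) (y::'a::chilbert) = cnj a * cinner x y"
  by (metis cinner_commute cinner_scaleC_right complex_cnj_mult)

lemma scaleC_zero_left [simp]: "0 *\<^sub>C (x::'a::chilbert) = 0"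
  by (metis add_cancel_right_right add_0 scaleC_add_left)

lemma scaleC_minus1_left: "(-1) *\<^sub>C (x::'a::chilbert) = - x"
  by (metis scaleR_scaleC of_real_1 of_real_minus scaleR_minus1_left)

lemma scaleC_minus_left: "(- a) *\<^sub>C (x::'a::chilbert) = - (a *\<^sub>C x)"
  by (metis scaleC_minus1_left scaleC_scaleC mult_minus1)

lemma scaleC_minus_right: "a *\<^sub>C (- x::'a::chilbert) = - (a *\<^sub>C x)"
  by (metis scaleC_minus1_left scaleC_scaleC mult.commute)

lemma scaleC_diff_right: "a *\<^sub>C (x - y::'a::chilbert) = a *\<^sub>C x - a *\<^sub>C y"
  by (metis diff_conv_add_uminus scaleC_add_right scaleC_minus_right)

lemma cinner_zero_right [simp]: "cinner x (0::'a::chilbert) = 0"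
  using cinner_add_right[of x 0 0] by simp

lemma cinner_zero_left [simp]: "cinner (0::'a::chilbert) x = 0"
  using cinner_add_left[of 0 0 x] by simp

lemma cinner_diff_right: "cinner x (y - z::'a::chilbert) = cinner x y - cinner x z"
  by (metis add_diff_cancel_right' cinner_add_right diff_add_cancel)

lemma cinner_diff_left: "cinner (x - y::'a::chilbert) z = cinner x z - cinner y z"
  by (metis add_diff_cancel_right' cinner_add_left diff_add_cancel)

lemmas cinner_simps =
  cinner_add_left cinner_add_right cinner_diff_left cinner_diff_right
  cinner_scaleC_left cinner_scaleC_right

lemma cinner_diff_scaleC_expand:
  "cinner (a - l *\<^sub>C b) (c - l *\<^sub>C d)
     = cinner a c - l * cinner a d - cnj l * cinner b c + cnj l * l * cinner b (d::'a::chilbert)"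
  by (simp add: cinner_simps algebra_simps)

lemma cinner_self: "cinner x (x::'a::chilbert) = complex_of_real ((norm x)\<^sup>2)"
proof -
  have "Im (cinner x x) = 0"
    using cinner_commute[of x x] by (metis Im_complex_of_real Reals_cnj_iff Reals_cases)
  moreover have "0 \<le> Re (cinner x x)"
    by (metis norm_eq_sqrt_cinner norm_ge_zero real_sqrt_ge_0_iff not_le)
  ultimately show ?thesis
    by (simp add: complex_eq_iff norm_eq_sqrt_cinner)
qed

lemma cinner_self_Re: "Re (cinner x (x::'a::chilbert)) = (norm x)\<^sup>2"
  by (simp add: cinner_self)

lemma norm_scaleC: "norm (a *\<^sub>C (x::'a::chilbert)) = cmod a * norm x"
proof -
  have "complex_of_real ((norm (a *\<^sub>C x))\<^sup>2) = cnj a * a * cinner x x"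
    by (simp only: cinner_self[symmetric]) (simp add: cinner_simps mult.assoc)
  also have "\<dots> = complex_of_real ((cmod a * norm x)\<^sup>2)"
    by (simp add: cinner_self complex_norm_square mult.commute power_mult_distrib del: of_real_power)
  finally show ?thesis
    by (simp del: of_real_power)
qed

lemma quadratic_form_Cauchy_Schwarz:
  fixes a b d :: complex
  assumes nonneg: "\<And>l. 0 \<le> Re (a - l * b - cnj l * cnj b + cnj l * l * d)"
    and "0 \<le> Re d"
  shows "(cmod b)\<^sup>2 \<le> Re a * Re d"
proof -
  define k where "k = (cmod b)\<^sup>2"
  have key: "0 \<le> Re a - 2 * t * k + t\<^sup>2 * k * Re d" for t :: real
  proof -
    have "Re (a - (t * cnj b) * b - cnj (t * cnj b) * cnj b + cnj (t * cnj b) * (t * cnj b) * d)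
        = Re a - 2 * t * k + t\<^sup>2 * k * Re d"
      unfolding k_def by (cases b) (simp add: cmod_def power2_eq_square algebra_simps)
    then show ?thesis
      using nonneg by metis
  qed
  consider "k = 0" | "k > 0" "Re d = 0" | "k > 0" "Re d > 0"
    using \<open>0 \<le> Re d\<close> by (fastforce simp: k_def)
  then show ?thesis
  proof cases
    case 1
    then show ?thesis
      using key[of 0] \<open>0 \<le> Re d\<close> by (simp add: k_def)
  next
    case 2
    \<comment> \<open>the quadratic in \<open>t\<close> degenerates to a line of negative slope\<close>
    then show ?thesis
      using key[of "(\<bar>Re a\<bar> + 1) / (2 * k)"] by simp
  next
    case 3
    have "0 \<le> Re a - k / Re d"
      using key[of "1 / Re d"] 3 by (simp add: power2_eq_square field_simps)
    then show ?thesis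
      using 3 by (simp add: k_def field_simps)
  qed
qed

lemma cmod_cinner_le: "cmod (cinner x y) \<le> norm x * norm (y::'a::chilbert)"
proof -
  have "(cmod (cinner x y))\<^sup>2 \<le> Re (cinner x x) * Re (cinner y y)"
  proof (rule quadratic_form_Cauchy_Schwarz)
    fix l
    have "cinner (x - l *\<^sub>C y) (x - l *\<^sub>C y)
        = cinner x x - l * cinner x y - cnj l * cnj (cinner x y) + cnj l * l * cinner y y"
      by (simp add: cinner_diff_scaleC_expand flip: cinner_commute)
    then show "0 \<le> Re (cinner x x - l * cinner x y - cnj l * cnj (cinner x y) + cnj l * l * cinner y y)"
      by (metis cinner_self_Re zero_le_power2)
  qed (simp add: cinner_self_Re)
  then have "(cmod (cinner x y))\<^sup>2 \<le> (norm x * norm y)\<^sup>2"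
    by (simp add: cinner_self_Re power_mult_distrib)
  then show ?thesis
    by (rule power2_le_imp_le) simp
qed

lemma Re_cinner_le: "Re (cinner x y) \<le> norm x * norm (y::'a::chilbert)"
  using complex_Re_le_cmod cmod_cinner_le order_trans by blast

lemma norm_add_square:
  "(norm (x + y))\<^sup>2 = (norm x)\<^sup>2 + (norm y)\<^sup>2 + 2 * Re (cinner x (y::'a::chilbert))"
  using cinner_commute[of y x] by (simp flip: cinner_self_Re add: cinner_simps)

lemma norm_diff_square:
  "(norm (x - y))\<^sup>2 = (norm x)\<^sup>2 + (norm y)\<^sup>2 - 2 * Re (cinner x (y::'a::chilbert))"
  using cinner_commute[of y x] by (simp flip: cinner_self_Re add: cinner_simps)

lemma parallelogram_law:
  "(norm (x + y))\<^sup>2 + (norm (x - y))\<^sup>2 = 2 * (norm x)\<^sup>2 + 2 * (norm (y::'a::chilbert))\<^sup>2"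
  using norm_add_square[of x y] norm_diff_square[of x y] by simp

lemma pythagoras:
  "cinner x y = 0 \<Longrightarrow> (norm (x + y))\<^sup>2 = (norm x)\<^sup>2 + (norm (y::'a::chilbert))\<^sup>2"
  using norm_add_square[of x y] by simp

lemma orthogonal_of_minimal_norm:
  fixes w m :: "'a::chilbert"
  assumes "\<And>l. norm w \<le> norm (w - l *\<^sub>C m)"
  shows "cinner w m = 0"
proof -
  have "(cmod (cinner w m))\<^sup>2 \<le> Re 0 * Re (cinner m m)"
  proof (rule quadratic_form_Cauchy_Schwarz)
    fix l
    have "cinner (w - l *\<^sub>C m) (w - l *\<^sub>C m) - cinner w w
        = 0 - l * cinner w m - cnj l * cnj (cinner w m) + cnj l * l * cinner m m"
      by (simp add: cinner_diff_scaleC_expand flip: cinner_commute)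
    moreover have "(norm w)\<^sup>2 \<le> (norm (w - l *\<^sub>C m))\<^sup>2"
      using assms[of l] by (simp add: power_mono)
    ultimately show "0 \<le> Re (0 - l * cinner w m - cnj l * cnj (cinner w m) + cnj l * l * cinner m m)"
      by (metis cinner_self_Re diff_ge_0_iff_ge minus_complex.sel(1))
  qed (simp add: cinner_self_Re)
  then show ?thesis
    by simp
qed

instantiation prod :: (chilbert, chilbert) chilbert
begin

definition scaleC_prod_def: "scaleC c p = (c *\<^sub>C fst p, c *\<^sub>C snd p)"

definition cinner_prod_def: "cinner p q = cinner (fst p) (fst q) + cinner (snd p) (snd q)"

instance
proof
  fix a b :: complex and x y z :: "'a \<times> 'b" and r :: real
  show "a *\<^sub>C (x + y) = a *\<^sub>C x + a *\<^sub>C y"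
    by (simp add: scaleC_prod_def scaleC_add_right)
  show "(a + b) *\<^sub>C x = a *\<^sub>C x + b *\<^sub>C x"
    by (simp add: scaleC_prod_def scaleC_add_left)
  show "a *\<^sub>C (b *\<^sub>C x) = (a * b) *\<^sub>C x"
    by (simp add: scaleC_prod_def scaleC_scaleC)
  show "1 *\<^sub>C x = x"
    by (simp add: scaleC_prod_def scaleC_one)
  show "r *\<^sub>R x = complex_of_real r *\<^sub>C x"
    by (simp add: scaleC_prod_def scaleR_scaleC prod_eq_iff)
  show "cinner x y = cnj (cinner y x)"
    by (simp add: cinner_prod_def cinner_commute[of "fst x"] cinner_commute[of "snd x"])
  show "cinner x (y + z) = cinner x y + cinner x z"
    by (simp add: cinner_prod_def cinner_add_right)
  show "cinner x (a *\<^sub>C y) = a * cinner x y"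
    by (simp add: cinner_prod_def scaleC_prod_def cinner_scaleC_right algebra_simps)
  show "norm x = sqrt (Re (cinner x x))"
    by (cases x) (simp add: cinner_prod_def norm_Pair cinner_self_Re)
qed

end

lemma orth_proj_eq_cinner:
  "orth_proj M z = (THE p. p \<in> M \<and> (\<forall>m\<in>M. cinner (z - p) m = 0))"
  by (simp add: orth_proj_def pinner_def cinner_prod_def)

section \<open>Orthogonal projections onto closed subspaces\<close>

lemma complex_subspace_add: "complex_subspace M \<Longrightarrow> x \<in> M \<Longrightarrow> y \<in> M \<Longrightarrow> x + y \<in> M"
  by (simp add: complex_subspace_def)

lemma complex_subspace_scaleC: "complex_subspace M \<Longrightarrow> x \<in> M \<Longrightarrow> c *\<^sub>C x \<in> M"
  by (simp add: complex_subspace_def)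

lemma complex_subspace_zero: "complex_subspace M \<Longrightarrow> 0 \<in> M"
  by (simp add: complex_subspace_def)

lemma complex_subspace_diff: "complex_subspace M \<Longrightarrow> x \<in> (M::'a::chilbert set) \<Longrightarrow> y \<in> M \<Longrightarrow> x - y \<in> M"
  by (metis diff_conv_add_uminus scaleC_minus1_left complex_subspace_add complex_subspace_scaleC)

lemma complex_subspace_scaleR: "complex_subspace M \<Longrightarrow> x \<in> (M::'a::chilbert set) \<Longrightarrow> r *\<^sub>R x \<in> M"
  by (metis scaleR_scaleC complex_subspace_scaleC)

lemma parallelogram_near_minimizers:
  fixes z a b :: "'a::chilbert"
  assumes "0 \<le> d" "d \<le> norm (z - (1/2) *\<^sub>R (a + b))"
    and "(norm (z - a))\<^sup>2 \<le> d\<^sup>2 + e" "(norm (z - b))\<^sup>2 \<le> d\<^sup>2 + e'"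
  shows "(norm (a - b))\<^sup>2 \<le> 2 * e + 2 * e'"
proof -
  have "(z - a) + (z - b) = 2 *\<^sub>R (z - (1/2) *\<^sub>R (a + b))"
    by (simp add: algebra_simps scaleR_2)
  then have "(norm ((z - a) + (z - b)))\<^sup>2 = 4 * (norm (z - (1/2) *\<^sub>R (a + b)))\<^sup>2"
    by (simp add: power2_eq_square)
  moreover have "d\<^sup>2 \<le> (norm (z - (1/2) *\<^sub>R (a + b)))\<^sup>2"
    using assms(1,2) by (simp add: power_mono)
  moreover have "(norm (a - b))\<^sup>2 = (norm ((z - a) - (z - b)))\<^sup>2"
    by (simp add: norm_minus_commute)
  ultimately show ?thesis
    using parallelogram_law[of "z - a" "z - b"] assms(3,4) by linarith
qed

lemma Cauchy_minimizing_sequence: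
  fixes M :: "'a::chilbert set"
  assumes sub: "complex_subspace M" and "0 \<le> d" and d_le: "\<And>m. m \<in> M \<Longrightarrow> d \<le> norm (z - m)"
    and f: "\<And>n. f n \<in> M" "\<And>n. (norm (z - f n))\<^sup>2 < d\<^sup>2 + 1 / real (Suc n)"
  shows "Cauchy f"
proof (rule metric_CauchyI)
  fix e :: real
  assume "0 < e"
  obtain N :: nat where N: "4 / e\<^sup>2 < real (Suc N)"
    using reals_Archimedean2 by (metis less_Suc_eq of_nat_less_iff order.strict_trans)
  have "dist (f m) (f n) < e" if "N \<le> m" "N \<le> n" for m n
  proof -
    have "1 / real (Suc m) \<le> 1 / real (Suc N)" "1 / real (Suc n) \<le> 1 / real (Suc N)"
      using that by (auto intro!: divide_left_mono)
    moreover have "(1/2) *\<^sub>R (f m + f n) \<in> M"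
      by (intro complex_subspace_scaleR complex_subspace_add sub f(1))
    then have "(norm (f m - f n))\<^sup>2 \<le> 2 * (1 / real (Suc m)) + 2 * (1 / real (Suc n))"
      using f(2) by (intro parallelogram_near_minimizers[OF \<open>0 \<le> d\<close> d_le] less_imp_le)
    moreover have "4 / real (Suc N) < e\<^sup>2"
      using N \<open>0 < e\<close> by (simp add: field_simps)
    ultimately have "(dist (f m) (f n))\<^sup>2 < e\<^sup>2"
      by (simp add: dist_norm)
    then show ?thesis
      using \<open>0 < e\<close> by (simp add: power_less_imp_less_base)
  qed
  then show "\<exists>N. \<forall>m\<ge>N. \<forall>n\<ge>N. dist (f m) (f n) < e"
    by blast
qed

lemma nearest_point_exists:
  fixes M :: "'a::chilbert set"
  assumes sub: "complex_subspace M" and cl: "closed M"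
  shows "\<exists>p\<in>M. \<forall>m\<in>M. norm (z - p) \<le> norm (z - m)"
proof -
  define d where "d = Inf ((\<lambda>m. norm (z - m)) ` M)"
  have "bdd_below ((\<lambda>m. norm (z - m)) ` M)"
    by (auto intro!: bdd_belowI[of _ 0])
  then have d_le: "d \<le> norm (z - m)" if "m \<in> M" for m
    unfolding d_def using that by (auto intro!: cInf_lower)
  have d_nonneg: "0 \<le> d"
    unfolding d_def using complex_subspace_zero[OF sub] by (auto intro!: cInf_greatest)
  have "\<exists>m\<in>M. (norm (z - m))\<^sup>2 < d\<^sup>2 + 1 / real (Suc n)" for n
  proof -
    have "d < sqrt (d\<^sup>2 + 1 / real (Suc n))"
      by (intro real_less_rsqrt) simp
    then obtain m where m: "m \<in> M" "norm (z - m) < sqrt (d\<^sup>2 + 1 / real (Suc n))"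
      using cInf_lessD[of "(\<lambda>m. norm (z - m)) ` M"] complex_subspace_zero[OF sub] unfolding d_def by blast
    then have "(norm (z - m))\<^sup>2 < (sqrt (d\<^sup>2 + 1 / real (Suc n)))\<^sup>2"
      by (intro power_strict_mono) auto
    then show ?thesis
      using m(1) by auto
  qed
  then obtain f where f: "\<And>n. f n \<in> M" "\<And>n. (norm (z - f n))\<^sup>2 < d\<^sup>2 + 1 / real (Suc n)"
    by metis
  obtain p where p: "f \<longlonglongrightarrow> p"
    using Cauchy_minimizing_sequence[OF sub d_nonneg d_le f] Cauchy_convergent_iff convergent_def
    by blast
  have "p \<in> M"
    using closed_sequentially[OF cl _ p] f(1) by blast
  have "(\<lambda>n. (norm (z - f n))\<^sup>2) \<longlonglongrightarrow> (norm (z - p))\<^sup>2"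
    by (intro tendsto_intros p)
  moreover have "(\<lambda>n. d\<^sup>2 + 1 / real (Suc n)) \<longlonglongrightarrow> d\<^sup>2"
    using tendsto_add[OF tendsto_const[of "d\<^sup>2"] LIMSEQ_inverse_real_of_nat]
    by (simp add: inverse_eq_divide)
  ultimately have "(norm (z - p))\<^sup>2 \<le> d\<^sup>2"
    using f(2) by (intro LIMSEQ_le) (auto intro: less_imp_le)
  then have "norm (z - p) \<le> d"
    using d_nonneg by (rule power2_le_imp_le)
  then show ?thesis
    using \<open>p \<in> M\<close> d_le by (blast intro: order_trans)
qed

lemma orthogonal_projection_exists:
  fixes M :: "'a::chilbert set"
  assumes sub: "complex_subspace M" and "closed M"
  shows "\<exists>p\<in>M. \<forall>m\<in>M. cinner (z - p) m = 0"
proof -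
  obtain p where p: "p \<in> M" "\<And>m. m \<in> M \<Longrightarrow> norm (z - p) \<le> norm (z - m)"
    using nearest_point_exists[OF assms] by blast
  have "cinner (z - p) m = 0" if "m \<in> M" for m
  proof (rule orthogonal_of_minimal_norm)
    fix l
    have "p + l *\<^sub>C m \<in> M"
      by (intro complex_subspace_add complex_subspace_scaleC sub p(1) that)
    then show "norm (z - p) \<le> norm (z - p - l *\<^sub>C m)"
      using p(2) by (simp add: diff_diff_eq)
  qed
  then show ?thesis
    using p(1) by blast
qed

lemma orthogonal_projection_unique:
  fixes M :: "'a::chilbert set"
  assumes "complex_subspace M"
    and "p \<in> M" "\<forall>m\<in>M. cinner (z - p) m = 0"
    and "q \<in> M" "\<forall>m\<in>M. cinner (z - q) m = 0"
  shows "p = q"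
proof -
  have "q - p \<in> M"
    using assms complex_subspace_diff by blast
  then have "cinner ((z - p) - (z - q)) (q - p) = 0"
    using assms by (simp add: cinner_diff_left)
  then have "norm (q - p) = 0"
    by (simp add: cinner_self)
  then show ?thesis
    by simp
qed

context
  fixes M :: "('a::chilbert \<times> 'a) set"
  assumes sub: "complex_subspace M" and cl: "closed M"
begin

lemma orth_proj_characterization:
  "orth_proj M z \<in> M \<and> (\<forall>m\<in>M. cinner (z - orth_proj M z) m = 0)"
proof -
  obtain p where p: "p \<in> M" "\<forall>m\<in>M. cinner (z - p) m = 0"
    using orthogonal_projection_exists[OF sub cl] by blast
  then have "\<exists>!p. p \<in> M \<and> (\<forall>m\<in>M. cinner (z - p) m = 0)"
    using orthogonal_projection_unique[OF sub] by blast
  then show ?thesis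
    unfolding orth_proj_eq_cinner by (rule theI')
qed

lemma orth_proj_in: "orth_proj M z \<in> M"
  using orth_proj_characterization by blast

lemma orth_proj_orthogonal: "m \<in> M \<Longrightarrow> cinner (z - orth_proj M z) m = 0"
  using orth_proj_characterization by blast

lemma orth_proj_add: "orth_proj M (x + y) = orth_proj M x + orth_proj M y"
proof (rule orthogonal_projection_unique[OF sub])
  have split: "x + y - (orth_proj M x + orth_proj M y) = (x - orth_proj M x) + (y - orth_proj M y)"
    by simp
  show "\<forall>m\<in>M. cinner (x + y - (orth_proj M x + orth_proj M y)) m = 0"
    unfolding split by (simp add: cinner_add_left orth_proj_orthogonal)
qed (use orth_proj_in orth_proj_orthogonal complex_subspace_add[OF sub] in auto)

lemma orth_proj_nearest: "p \<in> M \<Longrightarrow> norm (z - orth_proj M z) \<le> norm (z - p)"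
proof -
  assume "p \<in> M"
  then have "orth_proj M z - p \<in> M"
    using orth_proj_in complex_subspace_diff[OF sub] by blast
  moreover have "z - p = (z - orth_proj M z) + (orth_proj M z - p)"
    by simp
  ultimately have "(norm (z - p))\<^sup>2 = (norm (z - orth_proj M z))\<^sup>2 + (norm (orth_proj M z - p))\<^sup>2"
    using pythagoras[OF orth_proj_orthogonal] by metis
  then show ?thesis
    by (metis le_add_same_cancel1 norm_ge_zero power2_le_imp_le zero_le_power2)
qed

end

section \<open>Gap between graphs\<close>

lemma norm_orth_proj_le_of_orthogonal:
  fixes M N :: "('a::chilbert \<times> 'a) set"
  assumes sub: "complex_subspace N" and cl: "closed N" and "0 \<le> s"
    and w_perp: "\<And>m. m \<in> M \<Longrightarrow> cinner w m = 0"
    and near: "\<And>u. u \<in> N \<Longrightarrow> \<exists>p\<in>M. norm (u - p) \<le> s * norm u"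
  shows "norm (orth_proj N w) \<le> s * norm w"
proof -
  define b where "b = orth_proj N w"
  obtain p where p: "p \<in> M" "norm (b - p) \<le> s * norm b"
    using near orth_proj_in[OF sub cl] unfolding b_def by blast
  have "cinner b (w - b) = 0"
    using orth_proj_orthogonal[OF sub cl orth_proj_in[OF sub cl]] cinner_commute
    unfolding b_def by (metis complex_cnj_zero)
  moreover have "cinner p w = 0"
    using w_perp[OF p(1)] cinner_commute[of p w] by simp
  ultimately have "cinner b b = cinner (b - p) w"
    by (simp add: cinner_diff_left cinner_diff_right)
  then have "(norm b)\<^sup>2 \<le> norm (b - p) * norm w"
    by (metis Re_cinner_le cinner_self_Re)
  also have "\<dots> \<le> (s * norm w) * norm b"
    using mult_right_mono[OF p(2) norm_ge_zero[of w]] by (simp add: mult_ac)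
  finally show ?thesis
    using \<open>0 \<le> s\<close> unfolding b_def by (cases "b = 0") (auto simp: power2_eq_square b_def)
qed

lemma onorm_orth_proj_diff_le:
  fixes M N :: "('a::chilbert \<times> 'a) set"
  assumes subM: "complex_subspace M" and clM: "closed M"
    and subN: "complex_subspace N" and clN: "closed N" and s: "0 \<le> s"
    and MN: "\<And>u. u \<in> M \<Longrightarrow> \<exists>p\<in>N. norm (u - p) \<le> s * norm u"
    and NM: "\<And>u. u \<in> N \<Longrightarrow> \<exists>p\<in>M. norm (u - p) \<le> s * norm u"
  shows "onorm (\<lambda>z. orth_proj M z - orth_proj N z) \<le> s"
proof (rule onorm_bound[OF s])
  fix z
  define u where "u = orth_proj M z"
  define w where "w = z - u"
  define a where "a = u - orth_proj N u"
  define b where "b = orth_proj N w"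
  \<comment> \<open>\<open>P_M z - P_N z = a - b\<close> with \<open>a \<bottom> b\<close>; \<open>a\<close> is controlled by \<open>u \<in> M\<close>, \<open>b\<close> by \<open>w \<bottom> M\<close>\<close>
  have uM: "u \<in> M"
    unfolding u_def by (rule orth_proj_in[OF subM clM])
  have w_perp: "cinner w m = 0" if "m \<in> M" for m
    unfolding w_def u_def using orth_proj_orthogonal[OF subM clM that] .
  have diff: "orth_proj M z - orth_proj N z = a + (- b)"
    using orth_proj_add[OF subN clN, of u w] by (simp add: a_def b_def w_def u_def)
  have "cinner a (- b) = 0"
    using orth_proj_orthogonal[OF subN clN complex_subspace_diff[OF subN complex_subspace_zero[OF subN] orth_proj_in[OF subN clN]]]
    by (simp add: a_def b_def)
  then have "(norm (orth_proj M z - orth_proj N z))\<^sup>2 = (norm a)\<^sup>2 + (norm b)\<^sup>2"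
    unfolding diff by (metis norm_minus_cancel pythagoras)
  also have "\<dots> \<le> (s * norm u)\<^sup>2 + (s * norm w)\<^sup>2"
  proof (intro add_mono power_mono)
    obtain p where "p \<in> N" "norm (u - p) \<le> s * norm u"
      using MN[OF uM] by blast
    then show "norm a \<le> s * norm u"
      unfolding a_def using orth_proj_nearest[OF subN clN] by (blast intro: order_trans)
    show "norm b \<le> s * norm w"
      unfolding b_def by (rule norm_orth_proj_le_of_orthogonal[OF subN clN s w_perp NM])
  qed simp_all
  also have "\<dots> = (s * norm z)\<^sup>2"
    using pythagoras[of u w] w_perp[OF uM] cinner_commute[of u w]
    by (simp add: w_def power_mult_distrib distrib_left)
  finally show "norm (orth_proj M z - orth_proj N z) \<le> s * norm z"
    by (rule power2_le_imp_le) (use s in simp)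
qed

lemma bounded_clinear_bounded_linear: "bounded_clinear S \<Longrightarrow> bounded_linear S"
  unfolding bounded_clinear_def linear_on_def
  by (auto intro!: bounded_linear_intro simp: scaleR_scaleC)

lemma linear_on_zero: "complex_subspace D \<Longrightarrow> linear_on D F \<Longrightarrow> F 0 = (0::'a::chilbert)"
  unfolding linear_on_def by (metis scaleC_zero_left complex_subspace_zero)

lemma complex_subspace_graph:
  fixes F :: "'a::chilbert \<Rightarrow> 'a"
  assumes sub: "complex_subspace D" and lin: "linear_on D F"
  shows "complex_subspace (graph D F)"
  unfolding complex_subspace_def graph_def
proof (intro conjI ballI allI)
  show "0 \<in> {(F x, x) |x. x \<in> D}"
    using linear_on_zero[OF assms] complex_subspace_zero[OF sub] by (auto simp: zero_prod_def)
  show "p + q \<in> {(F x, x) |x. x \<in> D}" if pq: "p \<in> {(F x, x) |x. x \<in> D}" "q \<in> {(F x, x) |x. x \<in> D}" for p q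
  proof -
    obtain x y where "x \<in> D" "y \<in> D" "p = (F x, x)" "q = (F y, y)"
      using pq by blast
    moreover have "F (x + y) = F x + F y"
      using lin \<open>x \<in> D\<close> \<open>y \<in> D\<close> unfolding linear_on_def by blast
    ultimately show ?thesis
      using complex_subspace_add[OF sub] by auto
  qed
  show "k *\<^sub>C p \<in> {(F x, x) |x. x \<in> D}" if p: "p \<in> {(F x, x) |x. x \<in> D}" for k p
  proof -
    obtain x where "x \<in> D" "p = (F x, x)"
      using p by blast
    moreover have "F (k *\<^sub>C x) = k *\<^sub>C F x"
      using lin \<open>x \<in> D\<close> unfolding linear_on_def by blast
    ultimately show ?thesis
      using complex_subspace_scaleC[OF sub] by (auto simp: scaleC_prod_def)
  qed
qed

lemma closed_graph_add_bounded:
  fixes S T :: "'a::chilbert \<Rightarrow> 'a"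
  assumes clT: "closed (graph D T)" and S: "bounded_linear S"
  shows "closed (graph D (\<lambda>x. S x + T x))"
  unfolding closed_sequential_limits
proof (intro allI impI, elim conjE)
  fix u l
  assume uG: "\<forall>n. u n \<in> graph D (\<lambda>x. S x + T x)" and ul: "u \<longlonglongrightarrow> l"
  have u: "snd (u n) \<in> D" "fst (u n) - S (snd (u n)) = T (snd (u n))" for n
  proof -
    obtain x where "u n = (S x + T x, x)" "x \<in> D"
      using uG unfolding graph_def by blast
    then show "snd (u n) \<in> D" "fst (u n) - S (snd (u n)) = T (snd (u n))"
      by simp_all
  qed
  \<comment> \<open>the homeomorphism \<open>(y, x) \<mapsto> (y - S x, x)\<close> maps the graph of \<open>S + T\<close> onto that of \<open>T\<close>\<close>
  have "(\<lambda>n. (fst (u n) - S (snd (u n)), snd (u n))) \<longlonglongrightarrow> (fst l - S (snd l), snd l)"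
    using ul by (intro tendsto_intros bounded_linear.tendsto[OF S])
  moreover have "(fst (u n) - S (snd (u n)), snd (u n)) \<in> graph D T" for n
    using u unfolding graph_def by auto
  ultimately have "(fst l - S (snd l), snd l) \<in> graph D T"
    by (rule closed_sequentially[OF clT, rotated])
  then show "l \<in> graph D (\<lambda>x. S x + T x)"
    unfolding graph_def by (auto simp: prod_eq_iff diff_eq_eq intro!: exI[of _ "snd l"])
qed

lemma gap_bounded_perturbation_le:
  fixes S T :: "'a::chilbert \<Rightarrow> 'a"
  assumes sub: "complex_subspace D" and lin: "linear_on D T" and clT: "closed (graph D T)"
    and S: "bounded_clinear S" and e: "0 \<le> e" and S_le: "\<And>x. norm (S x) \<le> e * norm x"
  shows "gap D (\<lambda>x. S x + T x) D T \<le> e"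
  unfolding gap_def
proof (rule onorm_orth_proj_diff_le[OF complex_subspace_graph[OF sub] _ complex_subspace_graph[OF sub lin] clT e])
  show "linear_on D (\<lambda>x. S x + T x)"
    using S lin unfolding bounded_clinear_def linear_on_def by (simp add: scaleC_add_right)
  show "closed (graph D (\<lambda>x. S x + T x))"
    by (rule closed_graph_add_bounded[OF clT bounded_clinear_bounded_linear[OF S]])
  have close: "norm ((S x + T x, x) - (T x, x)) \<le> e * norm (y, x)"
    "norm ((T x, x) - (S x + T x, x)) \<le> e * norm (y, x)" for x y :: 'a
    using S_le[of x] norm_snd_le[of "(y, x)"] e
    by (simp_all add: norm_Pair order_trans mult_left_mono)
  show "\<exists>p\<in>graph D T. norm (u - p) \<le> e * norm u" if "u \<in> graph D (\<lambda>x. S x + T x)" for u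
    using that close(1) unfolding graph_def by blast
  show "\<exists>p\<in>graph D (\<lambda>x. S x + T x). norm (u - p) \<le> e * norm u" if "u \<in> graph D T" for u
    using that close(2) unfolding graph_def by blast
qed

section \<open>Self-adjoint operators\<close>

lemma eq_of_cinner_dense:
  fixes D :: "'a::chilbert set"
  assumes dense: "closure D = UNIV" and eq: "\<And>x. x \<in> D \<Longrightarrow> cinner x w = cinner x w'"
  shows "w = w'"
proof (rule ccontr)
  define v where "v = w - w'"
  assume "w \<noteq> w'"
  then have "0 < norm v"
    by (simp add: v_def)
  then obtain y where y: "y \<in> D" "dist y v < norm v"
    using dense closure_approachable[of v D] by blast
  have "cinner y v = 0"
    using eq[OF y(1)] by (simp add: v_def cinner_diff_right)
  then have "(norm v)\<^sup>2 = Re (cinner (v - y) v)"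
    by (simp add: cinner_diff_left cinner_self_Re)
  also have "\<dots> \<le> norm (v - y) * norm v"
    by (rule Re_cinner_le)
  also have "\<dots> < norm v * norm v"
    using y(2) \<open>0 < norm v\<close> by (simp add: dist_norm norm_minus_commute)
  finally show False
    by (simp add: power2_eq_square)
qed

lemma adjoint_eqI:
  assumes "closure D = UNIV" and "\<forall>x\<in>D. cinner (A x) y = cinner x z"
  shows "adjoint D A y = z"
  unfolding adjoint_def
proof (rule the_equality)
  show "\<forall>x\<in>D. cinner (A x) y = cinner x z"
    by fact
  show "z' = z" if "\<forall>x\<in>D. cinner (A x) y = cinner x z'" for z'
    using that assms by (intro eq_of_cinner_dense[of D]) auto
qed

lemma unit_vector_decomposition:
  fixes x :: "'a::chilbert"
  assumes "complex_subspace D" "x \<in> D" "x \<noteq> 0"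
  shows "\<exists>u\<in>D. norm u = 1 \<and> x = complex_of_real (norm x) *\<^sub>C u"
proof (intro bexI conjI)
  let ?u = "complex_of_real (1 / norm x) *\<^sub>C x"
  show "?u \<in> D"
    using assms by (simp add: complex_subspace_scaleC)
  show "norm ?u = 1"
    using assms(3) by (simp add: norm_scaleC norm_divide)
  show "x = complex_of_real (norm x) *\<^sub>C ?u"
    using assms(3) by (simp add: scaleC_scaleC flip: of_real_mult scaleC_one)
qed

lemma unit_vector_in_dense_subspace:
  fixes x :: "'a::chilbert" and D :: "'a set"
  assumes "x \<noteq> 0" and sub: "complex_subspace D" and dense: "closure D = UNIV"
  shows "\<exists>u\<in>D. norm u = 1"
proof -
  have "D \<noteq> {0}"
  proof
    assume D0: "D = {0}"
    have "closure D = D"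
      unfolding D0 by (rule closure_closed[OF closed_singleton])
    then have "x \<in> D"
      using dense by simp
    then show False
      using D0 \<open>x \<noteq> 0\<close> by simp
  qed
  then obtain y where "y \<in> D" "y \<noteq> 0"
    using complex_subspace_zero[OF sub] by blast
  then show ?thesis
    using unit_vector_decomposition[OF sub] by blast
qed

lemma bounded_below_of_unit_vectors:
  fixes A :: "'a::chilbert \<Rightarrow> 'a"
  assumes sub: "complex_subspace D" and lin: "linear_on D A"
    and unit: "\<And>u. u \<in> D \<Longrightarrow> norm u = 1 \<Longrightarrow> \<eta> \<le> norm (A u)"
    and "x \<in> D"
  shows "\<eta> * norm x \<le> norm (A x)"
proof (cases "x = 0")
  case True
  then show ?thesis
    by simp
next
  case False
  then obtain u where u: "u \<in> D" "norm u = 1" "x = complex_of_real (norm x) *\<^sub>C u"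
    using unit_vector_decomposition[OF sub \<open>x \<in> D\<close>] by blast
  then have "A x = complex_of_real (norm x) *\<^sub>C A u"
    using lin unfolding linear_on_def by metis
  then show ?thesis
    using mult_left_mono[OF unit[OF u(1,2)] norm_ge_zero[of x]] by (simp add: norm_scaleC mult.commute)
qed

lemma linear_on_diff:
  assumes "complex_subspace D" "linear_on D A" "x \<in> D" "y \<in> D"
  shows "A (x - y) = A x - (A y :: 'a::chilbert)"
proof -
  have "(-1) *\<^sub>C y \<in> D"
    using assms(1,4) by (rule complex_subspace_scaleC)
  then have "A (x + (-1) *\<^sub>C y) = A x + (-1) *\<^sub>C A y"
    using assms(2-4) unfolding linear_on_def by metis
  then show ?thesis
    by (simp add: scaleC_minus1_left)
qed

lemma complex_subspace_image:
  fixes A :: "'a::chilbert \<Rightarrow> 'a"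
  assumes sub: "complex_subspace D" and lin: "linear_on D A"
  shows "complex_subspace (A ` D)"
  unfolding complex_subspace_def
proof (intro conjI ballI allI)
  show "0 \<in> A ` D"
    using linear_on_zero[OF sub lin] complex_subspace_zero[OF sub] by (metis image_eqI)
  show "u + v \<in> A ` D" if "u \<in> A ` D" "v \<in> A ` D" for u v
  proof -
    obtain x y where "x \<in> D" "y \<in> D" "u = A x" "v = A y"
      using \<open>u \<in> A ` D\<close> \<open>v \<in> A ` D\<close> by blast
    then have "u + v = A (x + y)"
      using lin unfolding linear_on_def by simp
    then show ?thesis
      using complex_subspace_add[OF sub \<open>x \<in> D\<close> \<open>y \<in> D\<close>] by blast
  qed
  show "c *\<^sub>C u \<in> A ` D" if "u \<in> A ` D" for c u
  proof -
    obtain x where "x \<in> D" "u = A x"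
      using \<open>u \<in> A ` D\<close> by blast
    then have "c *\<^sub>C u = A (c *\<^sub>C x)"
      using lin unfolding linear_on_def by simp
    then show ?thesis
      using complex_subspace_scaleC[OF sub \<open>x \<in> D\<close>] by blast
  qed
qed

text \<open>The last two assumptions say \<open>A \<subseteq> A\<^sup>*\<close> and \<open>A\<^sup>* \<subseteq> A\<close>.\<close>

locale selfadjoint_operator =
  fixes D :: "'a::chilbert set" and A :: "'a \<Rightarrow> 'a"
  assumes subspace: "complex_subspace D"
    and linear: "linear_on D A"
    and closed_graph: "closed (graph D A)"
    and symmetric: "x \<in> D \<Longrightarrow> y \<in> D \<Longrightarrow> cinner (A x) y = cinner x (A y)"
    and adjoint_domain: "(\<And>x. x \<in> D \<Longrightarrow> cinner (A x) y = cinner x z) \<Longrightarrow> y \<in> D \<and> A y = z"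
begin

lemma diff: "x \<in> D \<Longrightarrow> y \<in> D \<Longrightarrow> A (x - y) = A x - A y"
  by (rule linear_on_diff[OF subspace linear])

lemma scaleC: "x \<in> D \<Longrightarrow> A (c *\<^sub>C x) = c *\<^sub>C A x"
  using linear unfolding linear_on_def by blast

lemma range_subspace: "complex_subspace (A ` D)"
  by (rule complex_subspace_image[OF subspace linear])

lemma closed_range_of_bounded_below:
  assumes "0 < \<eta>" and below: "\<And>x. x \<in> D \<Longrightarrow> \<eta> * norm x \<le> norm (A x)"
  shows "closed (A ` D)"
  unfolding closed_sequential_limits
proof (intro allI impI, elim conjE)
  fix f l
  assume f_range: "\<forall>n. f n \<in> A ` D" and fl: "f \<longlonglongrightarrow> l"
  have "\<forall>n. \<exists>x. x \<in> D \<and> A x = f n"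
    using f_range by (metis imageE)
  from choice[OF this] obtain g where g: "\<And>n. g n \<in> D" "\<And>n. A (g n) = f n"
    by blast
  have "Cauchy g"
  proof (rule metric_CauchyI)
    fix e :: real
    assume "0 < e"
    then obtain N where N: "\<forall>m\<ge>N. \<forall>n\<ge>N. dist (f m) (f n) < \<eta> * e"
      using metric_CauchyD[OF LIMSEQ_imp_Cauchy[OF fl]] \<open>0 < \<eta>\<close> by (meson mult_pos_pos)
    have "\<eta> * dist (g m) (g n) < \<eta> * e" if "N \<le> m" "N \<le> n" for m n
    proof -
      have "\<eta> * dist (g m) (g n) \<le> dist (f m) (f n)"
        using below[OF complex_subspace_diff[OF subspace g(1) g(1)]] by (simp add: dist_norm diff g)
      also have "\<dots> < \<eta> * e"
        using N that by blast
      finally show ?thesis .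
    qed
    then show "\<exists>N. \<forall>m\<ge>N. \<forall>n\<ge>N. dist (g m) (g n) < e"
      using \<open>0 < \<eta>\<close> by (meson mult_less_cancel_left_pos)
  qed
  then obtain x where gx: "g \<longlonglongrightarrow> x"
    using Cauchy_convergent_iff convergent_def by blast
  have "(\<lambda>n. (A (g n), g n)) \<longlonglongrightarrow> (l, x)"
    using fl gx by (simp add: g(2) tendsto_Pair)
  moreover have "(A (g n), g n) \<in> graph D A" for n
    using g(1) unfolding graph_def by blast
  ultimately have "(l, x) \<in> graph D A"
    by (rule closed_sequentially[OF closed_graph, rotated])
  then show "l \<in> A ` D"
    unfolding graph_def by blast
qed

lemma surj_of_bounded_below:
  assumes "0 < \<eta>" and below: "\<And>x. x \<in> D \<Longrightarrow> \<eta> * norm x \<le> norm (A x)"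
  shows "\<exists>x\<in>D. A x = y"
proof -
  obtain p where p: "p \<in> A ` D" "\<forall>r\<in>A ` D. cinner (y - p) r = 0"
    using orthogonal_projection_exists[OF range_subspace closed_range_of_bounded_below[OF assms]]
    by blast
  \<comment> \<open>\<open>y - p \<bottom> range A\<close> puts \<open>y - p\<close> in the kernel of the adjoint \<open>A\<close>\<close>
  have "cinner (A x) (y - p) = cinner x 0" if "x \<in> D" for x
    using p(2) that cinner_commute[of "A x" "y - p"] by simp
  then have "y - p \<in> D" "A (y - p) = 0"
    using adjoint_domain by blast+
  then have "y = p"
    using below[of "y - p"] \<open>0 < \<eta>\<close> by (simp add: mult_le_0_iff)
  then show ?thesis
    using p(1) by blast
qed

end

lemma selfadjoint_operator_shift:
  assumes "selfadjoint_operator D A"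
  shows "selfadjoint_operator D (\<lambda>x. A x - complex_of_real c *\<^sub>C x)"
proof -
  interpret selfadjoint_operator D A
    by fact
  have shift_eq: "(\<lambda>x. A x - complex_of_real c *\<^sub>C x) = (\<lambda>x. (- c) *\<^sub>R x + A x)"
    by (simp add: scaleR_scaleC scaleC_minus_left)
  show ?thesis
  proof
    show "complex_subspace D"
      by (rule subspace)
    show "linear_on D (\<lambda>x. A x - complex_of_real c *\<^sub>C x)"
      using linear unfolding linear_on_def
      by (simp add: scaleC_add_right scaleC_diff_right scaleC_scaleC mult.commute)
    show "closed (graph D (\<lambda>x. A x - complex_of_real c *\<^sub>C x))"
      unfolding shift_eq
      by (intro closed_graph_add_bounded closed_graph bounded_linear_scaleR_right)
    show "cinner (A x - complex_of_real c *\<^sub>C x) y = cinner x (A y - complex_of_real c *\<^sub>C y)"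
      if "x \<in> D" "y \<in> D" for x y
      using symmetric[OF that] by (simp add: cinner_simps)
    show "y \<in> D \<and> A y - complex_of_real c *\<^sub>C y = z"
      if "\<And>x. x \<in> D \<Longrightarrow> cinner (A x - complex_of_real c *\<^sub>C x) y = cinner x z" for y z
    proof -
      have "cinner (A x) y = cinner x (z + complex_of_real c *\<^sub>C y)" if "x \<in> D" for x
        using \<open>\<And>x. x \<in> D \<Longrightarrow> _\<close>[OF that] by (simp add: cinner_simps algebra_simps)
      then show ?thesis
        using adjoint_domain by (metis add_diff_cancel_right')
    qed
  qed
qed

locale nonneg_selfadjoint_operator = selfadjoint_operator +
  assumes nonneg: "x \<in> D \<Longrightarrow> 0 \<le> Re (cinner (A x) x)"
begin

lemma form_Cauchy_Schwarz:
  assumes "w \<in> D" "x \<in> D"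
  shows "(cmod (cinner (A w) x))\<^sup>2 \<le> Re (cinner (A w) w) * Re (cinner (A x) x)"
proof (rule quadratic_form_Cauchy_Schwarz)
  fix l
  have "w - l *\<^sub>C x \<in> D"
    using assms by (intro complex_subspace_diff complex_subspace_scaleC subspace)
  have A_comb: "A (w - l *\<^sub>C x) = A w - l *\<^sub>C A x"
    using assms by (simp add: diff scaleC complex_subspace_scaleC[OF subspace])
  have sym: "cinner (A x) w = cnj (cinner (A w) x)"
    using assms symmetric[of x w] cinner_commute[of x "A w"] by simp
  have "0 \<le> Re (cinner (A (w - l *\<^sub>C x)) (w - l *\<^sub>C x))"
    using \<open>w - l *\<^sub>C x \<in> D\<close> by (rule nonneg)
  then show "0 \<le> Re (cinner (A w) w - l * cinner (A w) x - cnj l * cnj (cinner (A w) x)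
      + cnj l * l * cinner (A x) x)"
    unfolding A_comb cinner_diff_scaleC_expand sym .
next
  show "0 \<le> Re (cinner (A x) x)"
    using nonneg assms(2) .
qed

lemma coercive_of_bounded_below:
  assumes "0 < \<eta>" and below: "\<And>x. x \<in> D \<Longrightarrow> \<eta> * norm x \<le> norm (A x)" and "x \<in> D"
  shows "\<eta> * (norm x)\<^sup>2 \<le> Re (cinner (A x) x)"
proof (cases "x = 0")
  case True
  then show ?thesis
    by simp
next
  case False
  obtain w where w: "w \<in> D" "A w = x"
    using surj_of_bounded_below[OF assms(1,2)] by blast
  \<comment> \<open>\<open>\<parallel>x\<parallel>\<^sup>4 = |\<langle>A w, x\<rangle>|\<^sup>2 \<le> \<langle>A w, w\<rangle> \<langle>A x, x\<rangle> \<le> \<parallel>x\<parallel> \<parallel>w\<parallel> \<langle>A x, x\<rangle> \<le> \<parallel>x\<parallel>\<^sup>2/\<eta> \<langle>A x, x\<rangle>\<close>\<close>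
  have "((norm x)\<^sup>2)\<^sup>2 \<le> Re (cinner x w) * Re (cinner (A x) x)"
    using form_Cauchy_Schwarz[OF w(1) \<open>x \<in> D\<close>] w(2) by (simp add: cinner_self del: of_real_power)
  also have "\<dots> \<le> (norm x * (norm x / \<eta>)) * Re (cinner (A x) x)"
  proof (rule mult_right_mono)
    have "norm w \<le> norm x / \<eta>"
      using below[OF w(1)] w(2) \<open>0 < \<eta>\<close> by (simp add: field_simps)
    then show "Re (cinner x w) \<le> norm x * (norm x / \<eta>)"
      using Re_cinner_le[of x w] by (meson mult_left_mono norm_ge_zero order_trans)
    show "0 \<le> Re (cinner (A x) x)"
      using nonneg \<open>x \<in> D\<close> .
  qed
  finally have "(norm x)\<^sup>2 * (norm x)\<^sup>2 \<le> (norm x)\<^sup>2 * (Re (cinner (A x) x) / \<eta>)"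
    by (simp add: power2_eq_square)
  then have "(norm x)\<^sup>2 \<le> Re (cinner (A x) x) / \<eta>"
    by (rule mult_left_le_imp_le) (use False in simp)
  then show ?thesis
    using \<open>0 < \<eta>\<close> by (simp add: field_simps)
qed

end

lemma positive_closed_op_selfadjoint_operator:
  assumes "positive_closed_op D T"
  shows "selfadjoint_operator D T"
proof -
  have dense: "closure D = UNIV" and adj: "adj_dom D T = D" "\<And>y. y \<in> D \<Longrightarrow> adjoint D T y = T y"
    using assms unfolding positive_closed_op_def densely_defined_def self_adjoint_def by auto
  have adjoint_domain: "y \<in> D \<and> T y = z" if "\<And>x. x \<in> D \<Longrightarrow> cinner (T x) y = cinner x z" for y z
  proof
    show "y \<in> D"
      using that adj(1) unfolding adj_dom_def by blast
    then show "T y = z"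
      using adjoint_eqI[OF dense] that adj(2) by metis
  qed
  show ?thesis
  proof
    show "complex_subspace D" "linear_on D T" "closed (graph D T)"
      using assms unfolding positive_closed_op_def densely_defined_def closed_op_def by auto
    show "cinner (T x) y = cinner x (T y)" if "x \<in> D" "y \<in> D" for x y
    proof -
      obtain z where "\<forall>x\<in>D. cinner (T x) y = cinner x z"
        using \<open>y \<in> D\<close> adj(1) unfolding adj_dom_def by blast
      then show ?thesis
        using adjoint_domain \<open>x \<in> D\<close> by metis
    qed
  qed (fact adjoint_domain)
qed

section \<open>The rank-two perturbation\<close>

lemma minimum_attaining_of_form_ge:
  fixes B :: "'a::chilbert \<Rightarrow> 'a"
  assumes form: "\<And>x. x \<in> D \<Longrightarrow> c * (norm x)\<^sup>2 \<le> Re (cinner (B x) x)"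
    and x0: "x0 \<in> D" "norm x0 = 1" "norm (B x0) = c"
  shows "minimum_attaining D B"
proof -
  have "c \<le> norm (B x)" if "x \<in> D" "norm x = 1" for x
    using form[OF that(1)] Re_cinner_le[of "B x" x] that(2) by simp
  then have "min_modulus D B = c"
    unfolding min_modulus_def using x0 by (intro cInf_eq_minimum) blast+
  then show ?thesis
    unfolding minimum_attaining_def using x0 by blast
qed

definition numerical_range_inf :: "'a::chilbert set \<Rightarrow> ('a \<Rightarrow> 'a) \<Rightarrow> real" where
  "numerical_range_inf D T = Inf {Re (cinner (T x) x) | x. x \<in> D \<and> norm x = 1}"

text \<open>For a unit vector \<open>x0\<close> and \<open>v = A x0\<close> with \<open>A\<close> self-adjoint, \<open>A + rank_two_correction x0 v\<close>
is the compression \<open>P A P\<close> of \<open>A\<close> by the projection \<open>P\<close> onto the orthogonal complement of \<open>x0\<close>.\<close>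

definition rank_two_correction :: "'a::chilbert \<Rightarrow> 'a \<Rightarrow> 'a \<Rightarrow> 'a" where
  "rank_two_correction x0 v x = (cinner v x0 * cinner x0 x) *\<^sub>C x0 - cinner x0 x *\<^sub>C v - cinner v x *\<^sub>C x0"

lemma rank_two_correction_unit_vector:
  "norm x0 = 1 \<Longrightarrow> rank_two_correction x0 v x0 = - v"
  by (simp add: rank_two_correction_def cinner_self scaleC_one)

lemma norm_rank_two_correction_le:
  assumes "norm x0 = 1"
  shows "norm (rank_two_correction x0 v x) \<le> 3 * norm v * norm x"
proof -
  have "norm (rank_two_correction x0 v x) \<le> norm ((cinner v x0 * cinner x0 x) *\<^sub>C x0)
      + norm (cinner x0 x *\<^sub>C v) + norm (cinner v x *\<^sub>C x0)"
    unfolding rank_two_correction_def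
    by (rule order_trans[OF norm_triangle_ineq4 add_right_mono[OF norm_triangle_ineq4]])
  also have "\<dots> = cmod (cinner v x0) * cmod (cinner x0 x) + cmod (cinner x0 x) * norm v + cmod (cinner v x)"
    using assms by (simp add: norm_scaleC norm_mult)
  also have "\<dots> \<le> norm v * norm x + norm x * norm v + norm v * norm x"
    using cmod_cinner_le[of v x0] cmod_cinner_le[of x0 x] cmod_cinner_le[of v x] assms
    by (intro add_mono mult_mono) auto
  finally show ?thesis
    by simp
qed

lemma bounded_clinear_rank_two_correction:
  assumes "norm x0 = 1"
  shows "bounded_clinear (rank_two_correction x0 v)"
  unfolding bounded_clinear_def linear_on_def
proof (intro conjI ballI allI exI)
  show "rank_two_correction x0 v (x + y) = rank_two_correction x0 v x + rank_two_correction x0 v y" for x y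
    by (simp add: rank_two_correction_def cinner_add_right scaleC_add_left distrib_left algebra_simps)
  show "rank_two_correction x0 v (c *\<^sub>C x) = c *\<^sub>C rank_two_correction x0 v x" for c x
    by (simp add: rank_two_correction_def cinner_scaleC_right scaleC_diff_right scaleC_add_right
        scaleC_scaleC algebra_simps)
  show "norm (rank_two_correction x0 v x) \<le> norm x * (3 * norm v)" for x
    using norm_rank_two_correction_le[OF assms] by (simp add: mult.commute mult.left_commute)
qed

context selfadjoint_operator
begin

lemma cinner_add_rank_two_correction:
  assumes "x0 \<in> D" "norm x0 = 1" "x \<in> D"
  shows "cinner (A x + rank_two_correction x0 (A x0) x) x
    = cinner (A (x - cinner x0 x *\<^sub>C x0)) (x - cinner x0 x *\<^sub>C x0)"
proof -
  have A_comb: "A (x - cinner x0 x *\<^sub>C x0) = A x - cinner x0 x *\<^sub>C A x0"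
    using assms by (simp add: diff scaleC complex_subspace_scaleC[OF subspace])
  have sym: "cinner (A x) x0 = cnj (cinner (A x0) x)"
    using symmetric[OF assms(3,1)] cinner_commute[of x "A x0"] by simp
  have real: "cnj (cinner (A x0) x0) = cinner (A x0) x0"
    using symmetric[OF assms(1,1)] cinner_commute[of x0 "A x0"] by simp
  have "cinner (A (x - cinner x0 x *\<^sub>C x0)) (x - cinner x0 x *\<^sub>C x0)
      = cinner (A x) x - cinner x0 x * cinner (A x) x0 - cnj (cinner x0 x) * cinner (A x0) x
        + cnj (cinner x0 x) * cinner x0 x * cinner (A x0) x0"
    unfolding A_comb cinner_diff_scaleC_expand ..
  also have "\<dots> = cinner (A x + rank_two_correction x0 (A x0) x) x"
    unfolding sym using real
    by (simp add: rank_two_correction_def cinner_simps algebra_simps)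
  finally show ?thesis ..
qed

end

context
  fixes D :: "'a::chilbert set" and T :: "'a \<Rightarrow> 'a"
  assumes pco: "positive_closed_op D T"
begin

interpretation selfadjoint_operator D T
  by (rule positive_closed_op_selfadjoint_operator[OF pco])

lemma form_nonneg: "x \<in> D \<Longrightarrow> 0 \<le> Re (cinner (T x) x)"
  using pco unfolding positive_closed_op_def by blast

lemma numerical_range_bdd_below: "bdd_below {Re (cinner (T x) x) | x. x \<in> D \<and> norm x = 1}"
  using form_nonneg by (auto intro!: bdd_belowI[of _ 0])

lemma numerical_range_inf_le:
  assumes "x \<in> D"
  shows "numerical_range_inf D T * (norm x)\<^sup>2 \<le> Re (cinner (T x) x)"
proof (cases "x = 0")
  case True
  then show ?thesis
    using linear_on_zero[OF subspace linear] by simp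
next
  case False
  then obtain u where u: "u \<in> D" "norm u = 1" "x = complex_of_real (norm x) *\<^sub>C u"
    using unit_vector_decomposition[OF subspace assms] by blast
  then have "cinner (T x) x = complex_of_real ((norm x)\<^sup>2) * cinner (T u) u"
    by (metis cinner_scaleC_left cinner_scaleC_right complex_cnj_complex_of_real mult.assoc
        of_real_mult power2_eq_square scaleC)
  moreover have "numerical_range_inf D T \<le> Re (cinner (T u) u)"
    unfolding numerical_range_inf_def using u numerical_range_bdd_below by (auto intro!: cInf_lower)
  ultimately show ?thesis
    using mult_right_mono[of "numerical_range_inf D T" "Re (cinner (T u) u)" "(norm x)\<^sup>2"]
    by (simp add: mult.commute del: of_real_power)
qed

lemma nonneg_selfadjoint_shift:
  "nonneg_selfadjoint_operator D (\<lambda>x. T x - complex_of_real (numerical_range_inf D T) *\<^sub>C x)"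
proof (intro nonneg_selfadjoint_operator.intro nonneg_selfadjoint_operator_axioms.intro)
  show "selfadjoint_operator D (\<lambda>x. T x - complex_of_real (numerical_range_inf D T) *\<^sub>C x)"
    by (intro selfadjoint_operator_shift selfadjoint_operator_axioms)
  show "0 \<le> Re (cinner (T x - complex_of_real (numerical_range_inf D T) *\<^sub>C x) x)" if "x \<in> D" for x
    using numerical_range_inf_le[OF that] by (simp add: cinner_diff_left cinner_scaleC_left cinner_self)
qed

context
  assumes unit: "\<exists>u\<in>D. norm u = 1"
begin

lemma numerical_range_inf_nonneg: "0 \<le> numerical_range_inf D T"
  unfolding numerical_range_inf_def using unit form_nonneg by (auto intro!: cInf_greatest)

lemma approximate_eigenvector:
  assumes "0 < \<eta>"
  shows "\<exists>x\<in>D. norm x = 1 \<and> norm (T x - complex_of_real (numerical_range_inf D T) *\<^sub>C x) \<le> \<eta>"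
proof (rule ccontr)
  define c where "c = numerical_range_inf D T"
  interpret A: nonneg_selfadjoint_operator D "\<lambda>x. T x - complex_of_real c *\<^sub>C x"
    unfolding c_def by (rule nonneg_selfadjoint_shift)
  assume "\<not> ?thesis"
  then have "\<eta> \<le> norm (T u - complex_of_real c *\<^sub>C u)" if "u \<in> D" "norm u = 1" for u
    using that unfolding c_def by force
  then have "\<eta> * norm x \<le> norm (T x - complex_of_real c *\<^sub>C x)" if "x \<in> D" for x
    by (rule bounded_below_of_unit_vectors[OF A.subspace A.linear _ that])
  then have above: "c + \<eta> \<le> Re (cinner (T u) u)" if "u \<in> D" "norm u = 1" for u
    using A.coercive_of_bounded_below[OF assms _ that(1)] that
    by (simp add: cinner_diff_left cinner_scaleC_left cinner_self)
  have "c + \<eta> \<le> numerical_range_inf D T"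
    unfolding numerical_range_inf_def
  proof (rule cInf_greatest)
    show "{Re (cinner (T x) x) |x. x \<in> D \<and> norm x = 1} \<noteq> {}"
      using unit by blast
  qed (use above in blast)
  then show False
    using assms by (simp add: c_def)
qed

lemma minimum_attaining_rank_two_perturbation:
  assumes "x0 \<in> D" "norm x0 = 1"
  defines "S \<equiv> rank_two_correction x0 (T x0 - complex_of_real (numerical_range_inf D T) *\<^sub>C x0)"
  shows "minimum_attaining D (\<lambda>x. T x + S x)"
proof -
  define c where "c = numerical_range_inf D T"
  interpret A: nonneg_selfadjoint_operator D "\<lambda>x. T x - complex_of_real c *\<^sub>C x"
    unfolding c_def by (rule nonneg_selfadjoint_shift)
  have "c * (norm x)\<^sup>2 \<le> Re (cinner (T x + S x) x)" if "x \<in> D" for x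
  proof -
    have "cinner (T x + S x) x = complex_of_real (c * (norm x)\<^sup>2)
        + cinner ((T x - complex_of_real c *\<^sub>C x) + S x) x"
      by (simp add: cinner_simps cinner_self)
    also have "cinner ((T x - complex_of_real c *\<^sub>C x) + S x) x
        = cinner (T (x - cinner x0 x *\<^sub>C x0) - complex_of_real c *\<^sub>C (x - cinner x0 x *\<^sub>C x0))
            (x - cinner x0 x *\<^sub>C x0)"
      unfolding S_def c_def[symmetric] using A.cinner_add_rank_two_correction[OF assms(1,2) that] .
    finally show ?thesis
      using A.nonneg[OF complex_subspace_diff[OF subspace that complex_subspace_scaleC[OF subspace assms(1)]]]
      by simp
  qed
  moreover have "norm (T x0 + S x0) = c"
    unfolding S_def c_def[symmetric] rank_two_correction_unit_vector[OF assms(2)]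
    using assms(2) numerical_range_inf_nonneg by (simp add: norm_scaleC c_def)
  ultimately show ?thesis
    using minimum_attaining_of_form_ge[of D c "\<lambda>x. T x + S x" x0] assms(1,2) by blast
qed

end

end

theorem theorem3p4:
  fixes T :: "'a::chilbert \<Rightarrow> 'a" and D :: "'a set" and \<epsilon> :: real
  assumes "infinite_dimensional TYPE('a)"
    and "positive_closed_op D T"
    and "\<epsilon> > 0"
  shows "\<exists>S. bounded_clinear S \<and> onorm S \<le> \<epsilon>
           \<and> minimum_attaining D (\<lambda>x. T x + S x)
           \<and> gap D (\<lambda>x. S x + T x) D T \<le> \<epsilon>"
proof -
  have sub: "complex_subspace D" and lin: "linear_on D T" and cl: "closed (graph D T)"
    and dense: "closure D = UNIV"
    using assms(2) unfolding positive_closed_op_def densely_defined_def closed_op_def by auto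
  obtain x :: 'a where "x \<noteq> 0"
    using assms(1) unfolding infinite_dimensional_def by fastforce
  then have unit: "\<exists>u\<in>D. norm u = 1"
    using sub dense by (rule unit_vector_in_dense_subspace)
  define c where "c = numerical_range_inf D T"
  obtain x0 where x0: "x0 \<in> D" "norm x0 = 1" "norm (T x0 - complex_of_real c *\<^sub>C x0) \<le> \<epsilon> / 3"
    using approximate_eigenvector[OF assms(2) unit, of "\<epsilon> / 3"] assms(3) unfolding c_def by auto
  define S where "S = rank_two_correction x0 (T x0 - complex_of_real c *\<^sub>C x0)"
  have S_le: "norm (S x) \<le> \<epsilon> * norm x" for x
    using norm_rank_two_correction_le[OF x0(2), of "T x0 - complex_of_real c *\<^sub>C x0" x]
      mult_right_mono[OF x0(3), of "norm x"] unfolding S_def by simp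
  have "bounded_clinear S"
    unfolding S_def by (rule bounded_clinear_rank_two_correction[OF x0(2)])
  moreover have "onorm S \<le> \<epsilon>"
    using S_le assms(3) by (intro onorm_bound) auto
  moreover have "minimum_attaining D (\<lambda>x. T x + S x)"
    unfolding S_def c_def by (rule minimum_attaining_rank_two_perturbation[OF assms(2) unit x0(1,2)])
  moreover have "gap D (\<lambda>x. S x + T x) D T \<le> \<epsilon>"
    using assms(3) by (intro gap_bounded_perturbation_le[OF sub lin cl \<open>bounded_clinear S\<close> _ S_le]) simp
  ultimately show ?thesis
    by blast
qed

end
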